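(* Let $G=(V=V_0\uplus V_1,v_{\mathsf{init}},E,\gamma)$ be a quantitative graph game, let $\mu>0$ be the maximum of the absolute values of the costs along transitions, and let $d=\frac pq>1$ be the discount factor with $p,q$ positive integers. Then for all $(v,w)\in E$ and all $k>0$, \[\mathsf{cost}_k(v,w)=\frac{q^{k-1}n_1+q^{k-2}p\,n_2+\cdots+p^{k-1}n_k}{p^{k-1}}\] for some integers $n_1,\dots,n_k$ with $|n_i|\le\mu$ for all $i\in\{1,\dots,k\}$.
   Context: A quantitative graph game $G=(V=V_0\uplus V_1, v_{\mathsf{init}},E,\gamma)$ consists of a finite directed graph $(V,E)$ in which every state has at least one outgoing edge, a partition of $V$ into $V_0$ (maximizing player) and $V_1$ (minimizing player), an initial state, and an integer cost function $\gamma:E\to\mathbb{Z}$. Value iteration defines $\mathit{wt}_1(v)=\max\{\gamma(v,w):(v,w)\in E\}$ for $v\in V_0$ ($\min$ for $v\in V_1$) and $\mathit{wt}_{k+1}(v)=\max\{\gamma(v,w)+\frac1d\mathit{wt}_k(w):(v,w)\in E\}$ for $v\in V_0$ ($\min$ for $v\in V_1$). The transition costs are $\mathsf{cost}_1(v,w)=\gamma(v,w)$ and $\mathsf{cost}_k(v,w)=\gamma(v,w)+\frac1d\mathit{wt}_{k-1}(w)$ for $k>1$, so that $\mathit{wt}_k(v)$ is the max (for $v\in V_0$) or min (for $v\in V_1$) of $\mathsf{cost}_k(v,w)$ over $(v,w)\in E$. *)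

theory Defs
  imports Complex_Main
begin

definition graph_game ::
  "'v set \<Rightarrow> 'v set \<Rightarrow> 'v set \<Rightarrow> 'v \<Rightarrow> ('v \<times> 'v) set \<Rightarrow> bool" where
  "graph_game V V0 V1 vinit E \<longleftrightarrow>
     finite V \<and> V = V0 \<union> V1 \<and> V0 \<inter> V1 = {} \<and> vinit \<in> V \<and>
     E \<subseteq> V \<times> V \<and> (\<forall>v\<in>V. \<exists>w. (v, w) \<in> E)"

text \<open>Value iteration: wt k v for k >= 1 (wt 0 is an unused dummy).\<close>
fun wt :: "'v set \<Rightarrow> ('v \<times> 'v) set \<Rightarrow> ('v \<times> 'v \<Rightarrow> int) \<Rightarrow> real \<Rightarrow> nat \<Rightarrow> 'v \<Rightarrow> real" where
  "wt V0 E \<gamma> d 0 v = 0"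
| "wt V0 E \<gamma> d (Suc 0) v =
     (if v \<in> V0 then Max {real_of_int (\<gamma> (v, w)) | w. (v, w) \<in> E}
      else Min {real_of_int (\<gamma> (v, w)) | w. (v, w) \<in> E})"
| "wt V0 E \<gamma> d (Suc (Suc k)) v =
     (if v \<in> V0 then Max {real_of_int (\<gamma> (v, w)) + wt V0 E \<gamma> d (Suc k) w / d | w. (v, w) \<in> E}
      else Min {real_of_int (\<gamma> (v, w)) + wt V0 E \<gamma> d (Suc k) w / d | w. (v, w) \<in> E})"

definition cost :: "'v set \<Rightarrow> ('v \<times> 'v) set \<Rightarrow> ('v \<times> 'v \<Rightarrow> int) \<Rightarrow> real \<Rightarrow> nat \<Rightarrow> 'v \<Rightarrow> 'v \<Rightarrow> real" where
  "cost V0 E \<gamma> d k v w =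
     (if k = 1 then real_of_int (\<gamma> (v, w))
      else real_of_int (\<gamma> (v, w)) + wt V0 E \<gamma> d (k - 1) w / d)"

end

theory Submission
  imports Defs
begin

text \<open>Unfolding value iteration, an optimal successor w' of w gives
  cost_(k+1)(v,w) = gamma(v,w) + cost_k(w,w')/d, so cost_k(v,w) is a sum of k edge costs
  weighted by the powers (1/d)^i = (q/p)^i, i < k. Clearing the denominator p^(k-1) gives
  the stated form.\<close>

definition discounted_int_sum :: "int \<Rightarrow> real \<Rightarrow> nat \<Rightarrow> real \<Rightarrow> bool" where
  "discounted_int_sum \<mu> r k x \<longleftrightarrow>
     (\<exists>m :: nat \<Rightarrow> int. (\<forall>i<k. \<bar>m i\<bar> \<le> \<mu>) \<and> x = (\<Sum>i<k. r ^ i * real_of_int (m i)))"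

lemma discounted_int_sum_0: "discounted_int_sum \<mu> r 0 0"
  by (simp add: discounted_int_sum_def)

lemma discounted_int_sum_Suc:
  assumes "\<bar>c\<bar> \<le> \<mu>" and "discounted_int_sum \<mu> r k x"
  shows "discounted_int_sum \<mu> r (Suc k) (real_of_int c + r * x)"
proof -
  obtain m where m: "\<forall>i<k. \<bar>m i\<bar> \<le> \<mu>" "x = (\<Sum>i<k. r ^ i * real_of_int (m i))"
    using assms(2) by (auto simp: discounted_int_sum_def)
  define m' where "m' i = (if i = 0 then c else m (i - 1))" for i
  have "real_of_int c + r * x = (\<Sum>i<Suc k. r ^ i * real_of_int (m' i))"
    unfolding sum.lessThan_Suc_shift m(2) m'_def by (simp add: sum_distrib_left mult.assoc)
  moreover have "\<forall>i<Suc k. \<bar>m' i\<bar> \<le> \<mu>"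
    using m(1) assms(1) by (auto simp: m'_def less_Suc_eq_0_disj)
  ultimately show ?thesis
    unfolding discounted_int_sum_def by blast
qed

lemma discounted_int_sum_common_denominator:
  fixes p q :: real
  assumes "p \<noteq> 0" and "discounted_int_sum \<mu> (q / p) k x"
  shows "\<exists>n :: nat \<Rightarrow> int. (\<forall>i \<in> {1..k}. \<bar>n i\<bar> \<le> \<mu>) \<and>
           x = (\<Sum>i = 1..k. q ^ (k - i) * p ^ (i - 1) * real_of_int (n i)) / p ^ (k - 1)"
proof -
  obtain m where m: "\<forall>i<k. \<bar>m i\<bar> \<le> \<mu>" "x = (\<Sum>j<k. (q / p) ^ j * real_of_int (m j))"
    using assms(2) by (auto simp: discounted_int_sum_def)
  have coeff: "q ^ (k - i) * p ^ (i - 1) * y / p ^ (k - 1) = (q / p) ^ (k - i) * y"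
    if "i \<in> {1..k}" for i y
  proof -
    have "p ^ (k - 1) = p ^ (k - i) * p ^ (i - 1)"
      using that by (simp flip: power_add)
    then show ?thesis
      using assms(1) by (simp add: power_divide)
  qed
  have "(\<Sum>i = 1..k. q ^ (k - i) * p ^ (i - 1) * real_of_int (m (k - i))) / p ^ (k - 1)
      = (\<Sum>i = 1..k. (q / p) ^ (k - i) * real_of_int (m (k - i)))"
    unfolding sum_divide_distrib by (intro sum.cong refl coeff)
  also have "\<dots> = x"
    unfolding m(2)
    by (rule sum.reindex_bij_witness[where i="\<lambda>j. k - j" and j="\<lambda>i. k - i"]) auto
  finally show ?thesis
    using m(1) by (intro exI[of _ "\<lambda>i. m (k - i)"]) auto
qed

lemma cost_Suc: "cost V0 E \<gamma> d (Suc k) v w = real_of_int (\<gamma> (v, w)) + wt V0 E \<gamma> d k w / d"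
  by (cases k) (simp_all add: cost_def)

lemma wt_attained:
  assumes "finite {w. (v, w) \<in> E}" and "\<exists>w. (v, w) \<in> E"
  shows "\<exists>w. (v, w) \<in> E \<and> wt V0 E \<gamma> d (Suc k) v = cost V0 E \<gamma> d (Suc k) v w"
proof -
  have opt_in: "Max {f w | w. (v, w) \<in> E} \<in> {f w | w. (v, w) \<in> E}
      \<and> Min {f w | w. (v, w) \<in> E} \<in> {f w | w. (v, w) \<in> E}" for f :: "_ \<Rightarrow> real"
  proof -
    have "{f w | w. (v, w) \<in> E} = f ` {w. (v, w) \<in> E}" by auto
    then show ?thesis
      using assms by (simp add: Max_in Min_in)
  qed
  show ?thesis
  proof (cases k)
    case 0
    then show ?thesis
      using opt_in[of "\<lambda>w. real_of_int (\<gamma> (v, w))"] by (auto simp: cost_def)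
  next
    case (Suc j)
    then show ?thesis
      using opt_in[of "\<lambda>w. real_of_int (\<gamma> (v, w)) + wt V0 E \<gamma> d (Suc j) w / d"]
      by (auto simp: cost_def)
  qed
qed

lemma wt_discounted_int_sum:
  assumes "finite E" and "E \<subseteq> V \<times> V" and "\<forall>v\<in>V. \<exists>w. (v, w) \<in> E"
    and "\<forall>e\<in>E. \<bar>\<gamma> e\<bar> \<le> \<mu>" and "v \<in> V"
  shows "discounted_int_sum \<mu> (1 / d) k (wt V0 E \<gamma> d k v)"
  using assms(5)
proof (induction k arbitrary: v)
  case 0
  then show ?case by (simp add: discounted_int_sum_0)
next
  case (Suc k)
  have succ_finite: "finite {w. (v, w) \<in> E}"
    by (rule finite_subset[of _ "snd ` E"]) (auto intro: rev_image_eqI assms(1))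
  obtain w where w: "(v, w) \<in> E" "wt V0 E \<gamma> d (Suc k) v = cost V0 E \<gamma> d (Suc k) v w"
    using wt_attained[OF succ_finite bspec[OF assms(3) Suc.prems]] by blast
  then have "w \<in> V" using assms(2) by blast
  then show ?case
    unfolding w(2) cost_Suc
    using discounted_int_sum_Suc[OF _ Suc.IH] w(1) assms(4) by simp
qed

lemma cost_discounted_int_sum:
  assumes "finite E" and "E \<subseteq> V \<times> V" and "\<forall>v\<in>V. \<exists>w. (v, w) \<in> E"
    and "\<forall>e\<in>E. \<bar>\<gamma> e\<bar> \<le> \<mu>" and "(v, w) \<in> E"
  shows "discounted_int_sum \<mu> (1 / d) (Suc k) (cost V0 E \<gamma> d (Suc k) v w)"
proof -
  have "w \<in> V" using assms(2,5) by blast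
  then show ?thesis
    unfolding cost_Suc
    using discounted_int_sum_Suc[OF _ wt_discounted_int_sum[OF assms(1-4)]] assms(4,5) by simp
qed

theorem lemma4:
  fixes V V0 V1 :: "'v set" and vinit :: 'v and E :: "('v \<times> 'v) set"
    and \<gamma> :: "'v \<times> 'v \<Rightarrow> int" and \<mu> :: int and p q :: nat and d :: real
  assumes "graph_game V V0 V1 vinit E"
    and "\<mu> = Max {\<bar>\<gamma> e\<bar> | e. e \<in> E}"
    and "\<mu> > 0"
    and "p > 0" and "q > 0"
    and "d = real p / real q"
    and "d > 1"
  shows "\<forall>(v, w) \<in> E. \<forall>k > 0. \<exists>n :: nat \<Rightarrow> int.
           (\<forall>i \<in> {1..k}. \<bar>n i\<bar> \<le> \<mu>) \<and>
           cost V0 E \<gamma> d k v w =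
             (\<Sum>i = 1..k. real q ^ (k - i) * real p ^ (i - 1) * real_of_int (n i)) / real p ^ (k - 1)"
proof (intro ballI allI impI, clarify)
  fix v w and k :: nat
  assume vw: "(v, w) \<in> E" and "0 < k"
  then obtain j where k: "k = Suc j" using gr0_implies_Suc by blast
  have EV: "E \<subseteq> V \<times> V" and out: "\<forall>v\<in>V. \<exists>w. (v, w) \<in> E" and "finite V"
    using assms(1) by (auto simp: graph_game_def)
  then have finE: "finite E" using finite_subset by blast
  have "{\<bar>\<gamma> e\<bar> | e. e \<in> E} = (\<lambda>e. \<bar>\<gamma> e\<bar>) ` E" by blast
  then have bound: "\<forall>e\<in>E. \<bar>\<gamma> e\<bar> \<le> \<mu>"
    using finE by (simp add: assms(2))
  have "discounted_int_sum \<mu> (1 / d) k (cost V0 E \<gamma> d k v w)"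
    unfolding k by (rule cost_discounted_int_sum[OF finE EV out bound vw])
  then have "discounted_int_sum \<mu> (real q / real p) k (cost V0 E \<gamma> d k v w)"
    using assms(6) by simp
  then show "\<exists>n :: nat \<Rightarrow> int. (\<forall>i \<in> {1..k}. \<bar>n i\<bar> \<le> \<mu>) \<and>
           cost V0 E \<gamma> d k v w =
             (\<Sum>i = 1..k. real q ^ (k - i) * real p ^ (i - 1) * real_of_int (n i)) / real p ^ (k - 1)"
    by (rule discounted_int_sum_common_denominator[rotated]) (use assms(4) in simp)
qed

end
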